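(* Let $\mathcal X$ be an irreducible $\Gamma$-based finite-state Markov chain with state set $S\subseteq E\Gamma$, let $\mu$ be any initial distribution on $S$, let $\mathcal B$ be a closing path system for $\Gamma$, and let $\widehat{\mathcal W}_\mu=\widehat W_1,\widehat W_2,\dots$ be the $\mathcal B$-closing of the $\mathcal X$-directed non-backtracking random walk $W_n=X_1\cdots X_n$. Then (i) there is $C>0$ with $|\widehat W_n|\le n+C$ for all $n$ (so the process is tame), and (ii) for almost every trajectory, $\lim_{n\to\infty}[\eta_{\widehat w_n}]=[\nu_{\mathcal X}]$ in $\mathbb P{\rm Curr}(F_N)$, i.e. $\widehat{\mathcal W}_\mu$ is adapted to the characteristic current $\nu_{\mathcal X}$.
   Context: $F_N$ free of rank $N\ge2$; $\Gamma$ a simplicial chart (finite connected graph, vertex degrees $\ge3$, Betti number $N$, marking $F_N\cong\pi_1(\Gamma,x_0)$), $E\Gamma$ its oriented edges; a closed reduced cyclically reduced edge-path in $\Gamma$ determines via the marking a nontrivial conjugacy class of $F_N$, and for such a path $w$, $\eta_w$ is the counting current of that class. ${\rm Curr}(F_N)$: geodesic currents; $\mathbb P{\rm Curr}(F_N)$ its projectivization. For a reduced edge-path $v$, $\langle v,\eta\rangle_\Gamma$ is the $\eta$-measure of the cylinder of a lift of $v$ to $\widetilde\Gamma$. A finite-state Markov chain $\mathcal X$ (state set $S$, transition probabilities $p_{\mathcal X}$) is $\Gamma$-based if $S\subseteq E\Gamma$, $\#S\ge2$, and $p_{\mathcal X}(e,e')>0$ implies $t(e)=o(e')$, $e'\ne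 e^{-1}$; irreducible means each state reaches every other with positive probability, giving a unique stationary distribution $\mu_0$. $\mu_0[k](s_1\cdots s_k)=\mu_0(s_1)\prod_{i<k}p_{\mathcal X}(s_i,s_{i+1})$ on $S^k$, and $0$ on other reduced paths. The characteristic current $\nu_{\mathcal X}$ is the unique current with $\langle v,\nu_{\mathcal X}\rangle_\Gamma=\mu_0[k](v)+\mu_0[k](v^{-1})$ for all reduced edge-paths $v$ of length $k\ge1$. Given initial distribution $\mu$, $X_1,X_2,\dots$ is the Markov process ($X_1\sim\mu$) and $W_n=X_1\cdots X_n$ (a reduced edge-path of length $n$) is the $\mathcal X$-directed non-backtracking walk. A closing path system $\mathcal B=(\beta_{e,e'})_{e,e'\in E\Gamma}$ consists of reduced edge-paths with $e\beta_{e,e'}e'$ reduced for all $e,e'$. The $\mathcal B$-closing of a nondegenerate reduced path $\gamma$ with last edge $e$ and first edge $e'$ is $\widehat\gamma=\gamma\beta_{e,e'}$ (a closed reduced cyclically reduced path); $\widehat W_n$ is the $\mathcal B$-closing of $W_n$, and $\widehat w_n$ its value along a trajectory. $|\cdot|$ is edge-path length. *)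

theory Defs
  imports "HOL-Probability.Probability"
begin

text \<open>A finite graph is given by a finite type 'v of vertices, a finite type 'e of
oriented edges, an origin map orig and a fixed-point-free involution iv (edge reversal).\<close>

definition term_e :: "('e \<Rightarrow> 'v) \<Rightarrow> ('e \<Rightarrow> 'e) \<Rightarrow> 'e \<Rightarrow> 'v" where
  "term_e orig iv e = orig (iv e)"

text \<open>Chart: connected, all degrees at least 3, Betti number N
(Betti number = #unoriented edges - #vertices + 1).\<close>
definition chart :: "('e::finite \<Rightarrow> 'v::finite) \<Rightarrow> ('e \<Rightarrow> 'e) \<Rightarrow> nat \<Rightarrow> bool" where
  "chart orig iv N \<longleftrightarrow>
     (\<forall>e. iv (iv e) = e \<and> iv e \<noteq> e) \<and>
     (\<forall>x. card {e. orig e = x} \<ge> 3) \<and>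
     (\<forall>x y. (x, y) \<in> {(orig e, term_e orig iv e) | e. True}\<^sup>*) \<and>
     int CARD('e) = 2 * (int N - 1 + int CARD('v))"

definition reduced_path :: "('e \<Rightarrow> 'v) \<Rightarrow> ('e \<Rightarrow> 'e) \<Rightarrow> 'e list \<Rightarrow> bool" where
  "reduced_path orig iv es \<longleftrightarrow>
     (\<forall>i. Suc i < length es \<longrightarrow>
        term_e orig iv (es ! i) = orig (es ! Suc i) \<and> es ! Suc i \<noteq> iv (es ! i))"

definition inv_path :: "('e \<Rightarrow> 'e) \<Rightarrow> 'e list \<Rightarrow> 'e list" where
  "inv_path iv v = rev (map iv v)"

definition closing_path_system ::
    "('e \<Rightarrow> 'v) \<Rightarrow> ('e \<Rightarrow> 'e) \<Rightarrow> ('e \<Rightarrow> 'e \<Rightarrow> 'e list) \<Rightarrow> bool" where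
  "closing_path_system orig iv \<beta> \<longleftrightarrow>
     (\<forall>e e'. reduced_path orig iv ([e] @ \<beta> e e' @ [e']))"

definition closing :: "('e \<Rightarrow> 'e \<Rightarrow> 'e list) \<Rightarrow> 'e list \<Rightarrow> 'e list" where
  "closing \<beta> \<gamma> = \<gamma> @ \<beta> (last \<gamma>) (hd \<gamma>)"

text \<open>Gamma-based finite-state Markov chain with state set S and transition probabilities
P (only the values on S x S are meaningful).\<close>
definition gamma_based_chain ::
    "('e \<Rightarrow> 'v) \<Rightarrow> ('e \<Rightarrow> 'e) \<Rightarrow> 'e set \<Rightarrow> ('e \<Rightarrow> 'e \<Rightarrow> real) \<Rightarrow> bool" where
  "gamma_based_chain orig iv S P \<longleftrightarrow>
     finite S \<and> card S \<ge> 2 \<and>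
     (\<forall>s\<in>S. \<forall>s'\<in>S. P s s' \<ge> 0) \<and>
     (\<forall>s\<in>S. (\<Sum>s'\<in>S. P s s') = 1) \<and>
     (\<forall>s\<in>S. \<forall>s'\<in>S. P s s' > 0 \<longrightarrow> term_e orig iv s = orig s' \<and> s' \<noteq> iv s)"

definition irreducible_chain :: "'e set \<Rightarrow> ('e \<Rightarrow> 'e \<Rightarrow> real) \<Rightarrow> bool" where
  "irreducible_chain S P \<longleftrightarrow>
     (\<forall>s\<in>S. \<forall>s'\<in>S. (s, s') \<in> {(a, b). a \<in> S \<and> b \<in> S \<and> P a b > 0}\<^sup>+)"

definition is_stationary :: "'e set \<Rightarrow> ('e \<Rightarrow> 'e \<Rightarrow> real) \<Rightarrow> ('e \<Rightarrow> real) \<Rightarrow> bool" where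
  "is_stationary S P m \<longleftrightarrow>
     (\<forall>s. s \<notin> S \<longrightarrow> m s = 0) \<and> (\<forall>s\<in>S. m s \<ge> 0) \<and> (\<Sum>s\<in>S. m s) = 1 \<and>
     (\<forall>s'\<in>S. (\<Sum>s\<in>S. m s * P s s') = m s')"

text \<open>The (unique, for irreducible chains) stationary distribution mu_0.\<close>
definition stationary_dist :: "'e set \<Rightarrow> ('e \<Rightarrow> 'e \<Rightarrow> real) \<Rightarrow> 'e \<Rightarrow> real" where
  "stationary_dist S P = (THE m. is_stationary S P m)"

definition path_weight ::
    "'e set \<Rightarrow> ('e \<Rightarrow> 'e \<Rightarrow> real) \<Rightarrow> ('e \<Rightarrow> real) \<Rightarrow> 'e list \<Rightarrow> real" where
  "path_weight S P m v =
     (if v \<noteq> [] \<and> set v \<subseteq> S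
      then m (hd v) * (\<Prod>i<length v - 1. P (v ! i) (v ! Suc i)) else 0)"

text \<open>Characteristic current nu_X, given by its values <v, nu_X>_Gamma on reduced paths v.\<close>
definition char_current ::
    "('e \<Rightarrow> 'e) \<Rightarrow> 'e set \<Rightarrow> ('e \<Rightarrow> 'e \<Rightarrow> real) \<Rightarrow> 'e list \<Rightarrow> real" where
  "char_current iv S P v =
     path_weight S P (stationary_dist S P) v + path_weight S P (stationary_dist S P) (inv_path iv v)"

text \<open>Number of occurrences of v in the cyclic word w (reading cyclically, possibly
wrapping around several times).\<close>
definition cyc_occ :: "'e list \<Rightarrow> 'e list \<Rightarrow> nat" where
  "cyc_occ w v = card {i. i < length w \<and> (\<forall>j<length v. w ! ((i + j) mod length w) = v ! j)}"

text \<open>Counting current eta_w of a closed reduced cyclically reduced path w, given by its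
values <v, eta_w>_Gamma = occurrences of v plus occurrences of v^{-1} in the cyclic word w.\<close>
definition counting_current :: "('e \<Rightarrow> 'e) \<Rightarrow> 'e list \<Rightarrow> 'e list \<Rightarrow> real" where
  "counting_current iv w v = real (cyc_occ w v + cyc_occ w (inv_path iv v))"

text \<open>Convergence [f_n] -> [g] in PCurr(F_N): there are positive scalars c_n with
c_n f_n -> g in Curr(F_N), where convergence in Curr(F_N) is convergence of all
cylinder values <v, .>_Gamma for nondegenerate reduced paths v.\<close>
definition pcurr_converges ::
    "('e \<Rightarrow> 'v) \<Rightarrow> ('e \<Rightarrow> 'e) \<Rightarrow> (nat \<Rightarrow> 'e list \<Rightarrow> real) \<Rightarrow> ('e list \<Rightarrow> real) \<Rightarrow> bool" where
  "pcurr_converges orig iv f g \<longleftrightarrow>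
     (\<exists>c. (\<forall>n. c n > 0) \<and>
       (\<forall>v. v \<noteq> [] \<and> reduced_path orig iv v \<longrightarrow> (\<lambda>n. c n * f n v) \<longlonglongrightarrow> g v))"

definition walk :: "(nat \<Rightarrow> 'a \<Rightarrow> 'e) \<Rightarrow> nat \<Rightarrow> 'a \<Rightarrow> 'e list" where
  "walk X n \<omega> = map (\<lambda>i. X (Suc i) \<omega>) [0..<n]"

end

theory Submission
  imports Defs "HOL-Library.Discrete_Functions" "HOL-Library.Sublist"
begin

text \<open>The counting current of the closed path \<open>W\<^sub>n\<^sub>+\<^sub>1\<close> evaluated on a cylinder \<open>v\<close> counts the
  cyclic occurrences of \<open>v\<close> and \<open>v\<^sup>-\<^sup>1\<close>; closing the path changes these counts by at most
  \<open>|\<beta>| + |v|\<close>, so scaled by \<open>1/(n+1)\<close> they have the same limit as the linear occurrence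
  frequencies of \<open>v\<close> along the walk. By the ergodic theorem for the chain the frequency of \<open>v\<close>
  converges almost surely to \<open>\<mu>\<^sub>0[k](v)\<close>, which gives convergence to \<open>\<nu>\<^sub>X\<close>.

  The ergodic theorem is proved by induction on \<open>v\<close>. For a single state it follows from a solution
  of the Poisson equation, which exists because the lazy chain \<open>(I + P)/2\<close> of an irreducible chain
  satisfies a Doeblin condition and hence converges geometrically to the unique stationary
  distribution. Extending \<open>v\<close> by one letter \<open>b\<close> costs the factor \<open>P(last v, b)\<close> up to a sum of
  bounded martingale increments. Such increments are orthogonal, and averages of bounded
  orthogonal sequences tend to zero almost surely (Chebyshev along the squares and Borel--Cantelli).\<close>

section \<open>Averages of bounded orthogonal sequences\<close>

lemma filterlim_floor_sqrt_at_top: "filterlim floor_sqrt at_top sequentially"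
  unfolding filterlim_at_top eventually_sequentially
  by (metis le_floor_sqrtI)

lemma LIMSEQ_div_zero_if_bounded_increments:
  fixes S :: "nat \<Rightarrow> real"
  assumes incr: "\<And>n. \<bar>S (Suc n) - S n\<bar> \<le> c"
    and squares: "(\<lambda>q. S (q\<^sup>2) / real (q\<^sup>2)) \<longlonglongrightarrow> 0"
  shows "(\<lambda>n. S n / real n) \<longlonglongrightarrow> 0"
proof -
  have "c \<ge> 0" using incr[of 0] by linarith
  have drift: "\<bar>S n - S m\<bar> \<le> c * real (n - m)" if "m \<le> n" for m n
    using that
  proof (induction n rule: dec_induct)
    case (step n)
    then show ?case using incr[of n] by (simp add: Suc_diff_le algebra_simps)
  qed simp
  define g where "g q = \<bar>S (q\<^sup>2) / real (q\<^sup>2)\<bar> + 2 * c / real q" for q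
  have "g \<longlonglongrightarrow> 0"
    unfolding g_def using squares by (intro tendsto_add_zero tendsto_rabs_zero lim_const_over_n)
  then have "(\<lambda>n. g (floor_sqrt n)) \<longlonglongrightarrow> 0"
    using filterlim_floor_sqrt_at_top by (rule filterlim_compose)
  moreover have "eventually (\<lambda>n. norm (S n / real n) \<le> g (floor_sqrt n)) sequentially"
    using eventually_ge_at_top[of 1]
  proof eventually_elim
    case (elim n)
    define q where "q = floor_sqrt n"
    have q: "q\<^sup>2 \<le> n" "n < (Suc q)\<^sup>2" "q \<ge> 1"
      using elim Suc_floor_sqrt_power2_gt[of n] by (auto simp: q_def Suc_le_eq)
    have "n - q\<^sup>2 \<le> 2 * q" using q by (simp add: power2_eq_square)
    then have "\<bar>S n\<bar> \<le> \<bar>S (q\<^sup>2)\<bar> + 2 * c * real q"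
      using drift[OF q(1)] \<open>c \<ge> 0\<close> mult_left_mono[of "real (n - q\<^sup>2)" "2 * real q" c] by linarith
    moreover have "real (q\<^sup>2) \<le> real n" "real (q\<^sup>2) > 0" using q by auto
    ultimately have "\<bar>S n\<bar> / real n \<le> (\<bar>S (q\<^sup>2)\<bar> + 2 * c * real q) / real (q\<^sup>2)"
      by (meson \<open>c \<ge> 0\<close> abs_ge_zero frac_le order_trans)
    also have "\<dots> = g q"
      using q(3) by (simp add: g_def add_divide_distrib power2_eq_square)
    finally show ?case by (simp add: q_def abs_divide)
  qed
  ultimately show ?thesis by (rule Lim_null_comparison[rotated])
qed

lemma (in prob_space) square_sum_orthogonal:
  fixes D :: "nat \<Rightarrow> 'a \<Rightarrow> real"
  assumes meas: "\<And>m. D m \<in> borel_measurable M"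
    and bounded: "\<And>m x. \<bar>D m x\<bar> \<le> c"
    and orth: "\<And>i j. i \<noteq> j \<Longrightarrow> (\<integral>x. D i x * D j x \<partial>M) = 0"
  shows "integrable M (\<lambda>x. (\<Sum>m<n. D m x)\<^sup>2)"
    and "(\<integral>x. (\<Sum>m<n. D m x)\<^sup>2 \<partial>M) \<le> c\<^sup>2 * real n"
proof -
  have square: "\<bar>D i x * D j x\<bar> \<le> c\<^sup>2" for i j x
    using bounded[of i x] bounded[of j x] by (simp add: abs_mult power2_eq_square mult_mono')
  have int: "integrable M (\<lambda>x. D i x * D j x)" for i j
    using meas square by (intro integrable_const_bound[where B = "c\<^sup>2"]) auto
  have expand: "(\<Sum>m<n. D m x)\<^sup>2 = (\<Sum>i<n. \<Sum>j<n. D i x * D j x)" for x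
    by (simp add: power2_eq_square sum_product)
  show "integrable M (\<lambda>x. (\<Sum>m<n. D m x)\<^sup>2)"
    unfolding expand using int by auto
  have "(\<integral>x. (\<Sum>m<n. D m x)\<^sup>2 \<partial>M) = (\<Sum>i<n. \<Sum>j<n. \<integral>x. D i x * D j x \<partial>M)"
    unfolding expand using int by simp
  also have "\<dots> = (\<Sum>i<n. \<integral>x. D i x * D i x \<partial>M)"
  proof (rule sum.cong[OF refl])
    fix i assume "i \<in> {..<n}"
    then show "(\<Sum>j<n. \<integral>x. D i x * D j x \<partial>M) = (\<integral>x. D i x * D i x \<partial>M)"
      by (subst sum.remove[of _ i]) (auto intro!: sum.neutral orth)
  qed
  also have "\<dots> \<le> (\<Sum>i<n. c\<^sup>2)"
    using int square by (intro sum_mono integral_le_const) (auto simp: abs_le_iff)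
  finally show "(\<integral>x. (\<Sum>m<n. D m x)\<^sup>2 \<partial>M) \<le> c\<^sup>2 * real n"
    by (simp add: mult.commute)
qed

lemma LIMSEQ_zero_if_eventually_lt_inverse_Suc:
  fixes f :: "nat \<Rightarrow> real"
  assumes "\<And>r. eventually (\<lambda>n. \<bar>f n\<bar> < inverse (real (Suc r))) sequentially"
  shows "f \<longlonglongrightarrow> 0"
proof (rule LIMSEQ_I)
  fix e :: real assume "e > 0"
  then obtain r where "inverse (real (Suc r)) < e" using reals_Archimedean by blast
  with assms[of r] show "\<exists>N. \<forall>n\<ge>N. norm (f n - 0) < e"
    unfolding eventually_sequentially by force
qed

text \<open>Chebyshev's inequality bounds the probability of a deviation at time \<open>q\<^sup>2\<close> by
  \<open>O(1/q\<^sup>2)\<close>, which is summable, so Borel--Cantelli applies along the squares.\<close>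

lemma (in prob_space) AE_square_partial_sums_small:
  fixes D :: "nat \<Rightarrow> 'a \<Rightarrow> real"
  assumes meas: "\<And>m. D m \<in> borel_measurable M"
    and bounded: "\<And>m x. \<bar>D m x\<bar> \<le> c"
    and orth: "\<And>i j. i \<noteq> j \<Longrightarrow> (\<integral>x. D i x * D j x \<partial>M) = 0"
  shows "AE x in M. eventually (\<lambda>q. \<bar>(\<Sum>m<(Suc q)\<^sup>2. D m x) / real ((Suc q)\<^sup>2)\<bar>
    < inverse (real (Suc r))) sequentially"
proof -
  define S where "S n x = (\<Sum>m<n. D m x)" for n x
  have S_meas: "S n \<in> borel_measurable M" for n
    unfolding S_def using meas by measurable
  have S_square: "integrable M (\<lambda>x. (S n x)\<^sup>2)" "(\<integral>x. (S n x)\<^sup>2 \<partial>M) \<le> c\<^sup>2 * real n" for n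
    unfolding S_def using square_sum_orthogonal[OF meas bounded orth] by auto
  define A where "A q = {x \<in> space M. real ((Suc q)\<^sup>2) / real (Suc r) \<le> \<bar>S ((Suc q)\<^sup>2) x\<bar>}" for q
  have bound: "measure M (A q) \<le> c\<^sup>2 * (real (Suc r))\<^sup>2 * (1 / (1 + real q)\<^sup>2)" for q
  proof -
    define a where "a = real ((Suc q)\<^sup>2) / real (Suc r)"
    have "measure M (A q) \<le> (\<integral>x. (S ((Suc q)\<^sup>2) x)\<^sup>2 \<partial>M) / a\<^sup>2"
      unfolding A_def a_def[symmetric]
      by (rule second_moment_method) (auto simp: a_def S_meas S_square)
    also have "\<dots> \<le> c\<^sup>2 * real ((Suc q)\<^sup>2) / a\<^sup>2"
      by (intro divide_right_mono S_square) simp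
    also have "\<dots> = c\<^sup>2 * (real (Suc r))\<^sup>2 * (1 / (1 + real q)\<^sup>2)"
    proof -
      have "c\<^sup>2 * x\<^sup>2 / (x\<^sup>2 / y)\<^sup>2 = c\<^sup>2 * y\<^sup>2 * (1 / x\<^sup>2)" if "x > 0" "y > 0" for x y :: real
        using that by (simp add: field_simps power2_eq_square)
      from this[of "1 + real q" "real (Suc r)"] show ?thesis
        by (simp add: a_def add.commute)
    qed
    finally show ?thesis .
  qed
  have "summable (\<lambda>q. 1 / (1 + real q)\<^sup>2)"
    using sums_summable[OF inverse_squares_sums] by simp
  from summable_mult[OF this, of "c\<^sup>2 * (real (Suc r))\<^sup>2"]
  have summable: "summable (\<lambda>q. measure M (A q))"
    by (rule summable_comparison_test'[where N = 0]) (use bound in simp)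
  have "AE x in M. eventually (\<lambda>q. x \<in> space M - A q) sequentially"
  proof (rule borel_cantelli_AE1)
    show "A q \<in> sets M" for q
      unfolding A_def using S_meas by measurable
  qed (simp_all add: summable less_top[symmetric])
  then show ?thesis
    by (rule AE_mp) (auto simp: A_def S_def not_le abs_divide field_simps elim!: eventually_mono)
qed

lemma (in prob_space) AE_averages_tendsto_zero_if_orthogonal:
  fixes D :: "nat \<Rightarrow> 'a \<Rightarrow> real"
  assumes meas: "\<And>m. D m \<in> borel_measurable M"
    and bounded: "\<And>m x. \<bar>D m x\<bar> \<le> c"
    and orth: "\<And>i j. i \<noteq> j \<Longrightarrow> (\<integral>x. D i x * D j x \<partial>M) = 0"
  shows "AE x in M. (\<lambda>n. (\<Sum>m<n. D m x) / real n) \<longlonglongrightarrow> 0"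
proof -
  have "AE x in M. \<forall>r. eventually (\<lambda>q. \<bar>(\<Sum>m<(Suc q)\<^sup>2. D m x) / real ((Suc q)\<^sup>2)\<bar>
      < inverse (real (Suc r))) sequentially"
    unfolding AE_all_countable
    using AE_square_partial_sums_small[where D = D and c = c, OF meas bounded orth] by blast
  then show ?thesis
  proof (rule AE_mp, intro AE_I2 impI)
    fix x assume "\<forall>r. eventually (\<lambda>q. \<bar>(\<Sum>m<(Suc q)\<^sup>2. D m x) / real ((Suc q)\<^sup>2)\<bar>
      < inverse (real (Suc r))) sequentially"
    then have "(\<lambda>q. (\<Sum>m<(Suc q)\<^sup>2. D m x) / real ((Suc q)\<^sup>2)) \<longlonglongrightarrow> 0"
      by (intro LIMSEQ_zero_if_eventually_lt_inverse_Suc) blast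
    then have "(\<lambda>q. (\<Sum>m<q\<^sup>2. D m x) / real (q\<^sup>2)) \<longlonglongrightarrow> 0"
      by (rule LIMSEQ_imp_Suc)
    moreover have "\<bar>(\<Sum>m<Suc n. D m x) - (\<Sum>m<n. D m x)\<bar> \<le> c" for n
      using bounded by simp
    ultimately show "(\<lambda>n. (\<Sum>m<n. D m x) / real n) \<longlonglongrightarrow> 0"
      by (rule LIMSEQ_div_zero_if_bounded_increments[rotated])
  qed
qed

lemma LIMSEQ_div_if_bounded_difference:
  fixes a b :: "nat \<Rightarrow> real"
  assumes "(\<lambda>n. b n / real n) \<longlonglongrightarrow> L" and "\<And>n. \<bar>a n - b n\<bar> \<le> C"
  shows "(\<lambda>n. a n / real n) \<longlonglongrightarrow> L"
proof -
  have "norm ((a n - b n) / real n) \<le> C / real n" for n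
    using assms(2) by (simp add: abs_divide divide_right_mono)
  then have "(\<lambda>n. (a n - b n) / real n) \<longlonglongrightarrow> 0"
    by (rule Lim_null_comparison[OF always_eventually[OF allI] lim_const_over_n])
  from tendsto_add[OF this assms(1)] show ?thesis
    by (simp add: diff_divide_distrib)
qed

section \<open>Finite irreducible Markov chains\<close>

lemma power_div_le_root_power:
  fixes \<rho> :: real
  assumes "0 < \<rho>" "\<rho> < 1" "0 < R"
  shows "\<rho> ^ (n div R) \<le> (1 / \<rho>) * root R \<rho> ^ n"
proof -
  define \<sigma> where "\<sigma> = root R \<rho>"
  have \<sigma>: "0 < \<sigma>" "\<sigma> < 1" "\<sigma> ^ R = \<rho>"
    using assms by (auto simp: \<sigma>_def real_root_lt_1_iff)
  have "\<rho> ^ (n div R) * \<rho> \<le> \<rho> ^ (n div R) * \<sigma> ^ (n mod R)"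
    using \<sigma> assms by (intro mult_left_mono power_decreasing) (auto simp flip: \<sigma>(3))
  also have "\<dots> = \<sigma> ^ n"
    by (simp flip: \<sigma>(3) power_mult power_add)
  finally show ?thesis
    using assms by (simp add: \<sigma>_def field_simps)
qed

locale irreducible_markov_chain =
  fixes S :: "'s set" and P :: "'s \<Rightarrow> 's \<Rightarrow> real"
  assumes finite_states: "finite S" and states_nonempty: "S \<noteq> {}"
    and transition_nonneg: "\<And>s t. s \<in> S \<Longrightarrow> t \<in> S \<Longrightarrow> 0 \<le> P s t"
    and transition_row_sum: "\<And>s. s \<in> S \<Longrightarrow> (\<Sum>t\<in>S. P s t) = 1"
    and irreducible: "irreducible_chain S P"
begin

text \<open>Iterates of \<open>P\<close> itself need not converge when the chain is periodic, so convergence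
  is proved for the lazy chain \<open>(I + P) / 2\<close>, which has the same stationary distributions and
  the same solutions of the Poisson equation up to a factor \<open>2\<close>.\<close>

definition lazy_step :: "('s \<Rightarrow> real) \<Rightarrow> 's \<Rightarrow> real" where
  "lazy_step f s = (f s + (\<Sum>t\<in>S. P s t * f t)) / 2"

abbreviation lazy_iter :: "nat \<Rightarrow> ('s \<Rightarrow> real) \<Rightarrow> 's \<Rightarrow> real" where
  "lazy_iter n \<equiv> lazy_step ^^ n"

definition lazy_kernel :: "nat \<Rightarrow> 's \<Rightarrow> 's \<Rightarrow> real" where
  "lazy_kernel n s u = lazy_iter n (indicator {u}) s"

lemma lazy_step_le:
  assumes "\<And>t. t \<in> S \<Longrightarrow> f t \<le> b" and "s \<in> S"
  shows "lazy_step f s \<le> b"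
proof -
  have "(\<Sum>t\<in>S. P s t * f t) \<le> (\<Sum>t\<in>S. P s t * b)"
    using assms transition_nonneg by (intro sum_mono mult_left_mono) auto
  also have "\<dots> = b"
    using transition_row_sum[OF \<open>s \<in> S\<close>] by (simp flip: sum_distrib_right)
  finally show ?thesis
    using assms(1)[OF assms(2)] by (simp add: lazy_step_def)
qed

lemma lazy_step_ge:
  assumes "\<And>t. t \<in> S \<Longrightarrow> b \<le> f t" and "s \<in> S"
  shows "b \<le> lazy_step f s"
proof -
  have "(\<Sum>t\<in>S. P s t * b) \<le> (\<Sum>t\<in>S. P s t * f t)"
    using assms transition_nonneg by (intro sum_mono mult_left_mono) auto
  moreover have "(\<Sum>t\<in>S. P s t * b) = b"
    using transition_row_sum[OF \<open>s \<in> S\<close>] by (simp flip: sum_distrib_right)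
  ultimately show ?thesis
    using assms(1)[OF assms(2)] by (simp add: lazy_step_def)
qed

lemma lazy_iter_le: "(\<And>t. t \<in> S \<Longrightarrow> f t \<le> b) \<Longrightarrow> s \<in> S \<Longrightarrow> lazy_iter n f s \<le> b"
  by (induction n arbitrary: s) (auto intro!: lazy_step_le)

lemma lazy_iter_ge: "(\<And>t. t \<in> S \<Longrightarrow> b \<le> f t) \<Longrightarrow> s \<in> S \<Longrightarrow> b \<le> lazy_iter n f s"
  by (induction n arbitrary: s) (auto intro!: lazy_step_ge)

lemma lazy_iter_const: "s \<in> S \<Longrightarrow> lazy_iter n (\<lambda>_. a) s = a"
  by (intro antisym lazy_iter_le lazy_iter_ge) auto

lemma lazy_iter_cong: "(\<And>t. t \<in> S \<Longrightarrow> f t = g t) \<Longrightarrow> s \<in> S \<Longrightarrow> lazy_iter n f s = lazy_iter n g s"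
  by (induction n arbitrary: s) (auto simp: lazy_step_def)

lemma lazy_step_sum: "lazy_step (\<lambda>t. \<Sum>u\<in>A. a u * g u t) s = (\<Sum>u\<in>A. a u * lazy_step (g u) s)"
  by (simp add: lazy_step_def sum_distrib_left sum.distrib sum_divide_distrib algebra_simps
      sum.swap[of _ S] add_divide_distrib)

lemma lazy_iter_sum: "lazy_iter n (\<lambda>t. \<Sum>u\<in>A. a u * g u t) = (\<lambda>s. \<Sum>u\<in>A. a u * lazy_iter n (g u) s)"
  by (induction n) (simp_all add: lazy_step_sum)

lemma lazy_iter_kernel:
  assumes "s \<in> S"
  shows "lazy_iter n f s = (\<Sum>u\<in>S. f u * lazy_kernel n s u)"
proof -
  have "lazy_iter n f s = lazy_iter n (\<lambda>t. \<Sum>u\<in>S. f u * indicator {u} t) s"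
    using finite_states by (intro lazy_iter_cong[OF _ assms]) (simp add: indicator_def)
  then show ?thesis
    by (simp add: lazy_iter_sum lazy_kernel_def)
qed

lemma lazy_kernel_nonneg: "s \<in> S \<Longrightarrow> 0 \<le> lazy_kernel n s u"
  unfolding lazy_kernel_def by (rule lazy_iter_ge) auto

lemma lazy_kernel_sum: "s \<in> S \<Longrightarrow> (\<Sum>u\<in>S. lazy_kernel n s u) = 1"
  using lazy_iter_kernel[of s n "\<lambda>_. 1"] lazy_iter_const[of s n 1] by simp

lemma lazy_kernel_one: "s \<in> S \<Longrightarrow> t \<in> S \<Longrightarrow> lazy_kernel (Suc 0) s t = (indicator {t} s + P s t) / 2"
  using finite_states by (simp add: lazy_kernel_def lazy_step_def indicator_def)

lemma lazy_kernel_add_ge: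
  assumes "s \<in> S" "v \<in> S" "t \<in> S"
  shows "lazy_kernel m s v * lazy_kernel n v t \<le> lazy_kernel (m + n) s t"
proof -
  have "lazy_kernel (m + n) s t = lazy_iter m (\<lambda>u. lazy_kernel n u t) s"
    by (simp add: lazy_kernel_def funpow_add)
  also have "\<dots> = (\<Sum>u\<in>S. lazy_kernel n u t * lazy_kernel m s u)"
    by (rule lazy_iter_kernel[OF assms(1)])
  also have "\<dots> \<ge> lazy_kernel n v t * lazy_kernel m s v"
  proof (rule member_le_sum[OF assms(2) _ finite_states])
    fix u assume "u \<in> S - {v}"
    then show "0 \<le> lazy_kernel n u t * lazy_kernel m s u"
      using assms(1) lazy_kernel_nonneg by simp
  qed
  finally show ?thesis by (simp add: mult.commute)
qed

lemma lazy_kernel_pos_if_path: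
  assumes "(s, t) \<in> {(a, b). a \<in> S \<and> b \<in> S \<and> 0 < P a b}\<^sup>+"
  shows "\<exists>n. 0 < lazy_kernel n s t"
  using assms
proof (induction rule: trancl_induct)
  case (base t)
  then have "0 < (indicator {t} s + P s t) / 2" by (auto simp: indicator_def)
  with base have "0 < lazy_kernel 1 s t" by (simp add: lazy_kernel_one)
  then show ?case ..
next
  case (step u t)
  then obtain n where "0 < lazy_kernel n s u" by blast
  moreover from step(2) have "0 < (indicator {t} u + P u t) / 2" by (auto simp: indicator_def)
  with step(2) have "0 < lazy_kernel 1 u t" by (simp add: lazy_kernel_one)
  ultimately have "0 < lazy_kernel n s u * lazy_kernel 1 u t" by simp
  also have "s \<in> S" using step(1) by (induction rule: trancl_induct) auto
  with step(2) have "lazy_kernel n s u * lazy_kernel 1 u t \<le> lazy_kernel (n + 1) s t"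
    by (intro lazy_kernel_add_ge) auto
  finally show ?case ..
qed

text \<open>The lazy chain stays put with probability at least \<open>1/2\<close>, so positivity of a transition
  probability persists at all later times.\<close>

lemma lazy_kernel_pos_mono:
  assumes "s \<in> S" "t \<in> S" "0 < lazy_kernel n s t" "n \<le> m"
  shows "0 < lazy_kernel m s t"
  using assms(4)
proof (induction m rule: dec_induct)
  case (step m)
  have "1 / 2 \<le> lazy_kernel 1 s s"
    using lazy_kernel_one[OF assms(1,1)] transition_nonneg[OF assms(1,1)] by simp
  then have "0 < lazy_kernel 1 s s * lazy_kernel m s t" using step by simp
  also have "\<dots> \<le> lazy_kernel (Suc m) s t" using lazy_kernel_add_ge[OF assms(1,1,2), of 1 m] by simp
  finally show ?case .
qed (use assms in simp)

lemma lazy_kernel_uniformly_pos: "\<exists>R \<delta>. 0 < R \<and> 0 < \<delta> \<and> (\<forall>s\<in>S. \<forall>t\<in>S. \<delta> \<le> lazy_kernel R s t)"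
proof -
  have "\<forall>st\<in>S \<times> S. \<exists>n. 0 < lazy_kernel n (fst st) (snd st)"
    using irreducible lazy_kernel_pos_if_path unfolding irreducible_chain_def by auto
  then obtain time where time: "\<And>st. st \<in> S \<times> S \<Longrightarrow> 0 < lazy_kernel (time st) (fst st) (snd st)"
    by metis
  define R where "R = Suc (Max (time ` (S \<times> S)))"
  have "0 < lazy_kernel R s t" if "s \<in> S" "t \<in> S" for s t
  proof (rule lazy_kernel_pos_mono[OF that])
    show "0 < lazy_kernel (time (s, t)) s t" using time[of "(s, t)"] that by simp
    have "time (s, t) \<le> Max (time ` (S \<times> S))"
      using finite_states that by (intro Max_ge) auto
    then show "time (s, t) \<le> R" by (simp add: R_def)
  qed
  then have "0 < Min ((\<lambda>(s, t). lazy_kernel R s t) ` (S \<times> S))"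
    using finite_states states_nonempty by (subst Min_gr_iff) auto
  moreover have "Min ((\<lambda>(s, t). lazy_kernel R s t) ` (S \<times> S)) \<le> lazy_kernel R s t"
    if "s \<in> S" "t \<in> S" for s t
    using finite_states that by (intro Min_le) auto
  moreover have "0 < R" by (simp add: R_def)
  ultimately show ?thesis by blast
qed

definition state_max :: "('s \<Rightarrow> real) \<Rightarrow> real" where
  "state_max f = Max (f ` S)"

definition state_min :: "('s \<Rightarrow> real) \<Rightarrow> real" where
  "state_min f = Min (f ` S)"

definition oscillation :: "('s \<Rightarrow> real) \<Rightarrow> real" where
  "oscillation f = state_max f - state_min f"

lemma le_state_max: "s \<in> S \<Longrightarrow> f s \<le> state_max f"
  using finite_states by (simp add: state_max_def)

lemma state_min_le: "s \<in> S \<Longrightarrow> state_min f \<le> f s"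
  using finite_states by (simp add: state_min_def)

lemma state_max_le_iff: "state_max f \<le> b \<longleftrightarrow> (\<forall>s\<in>S. f s \<le> b)"
  using finite_states states_nonempty by (simp add: state_max_def)

lemma le_state_min_iff: "b \<le> state_min f \<longleftrightarrow> (\<forall>s\<in>S. b \<le> f s)"
  using finite_states states_nonempty by (simp add: state_min_def)

lemma state_max_attained: "\<exists>s\<in>S. f s = state_max f"
proof -
  have "Max (f ` S) \<in> f ` S" using finite_states states_nonempty by simp
  then show ?thesis by (auto simp: state_max_def)
qed

lemma state_min_attained: "\<exists>s\<in>S. f s = state_min f"
proof -
  have "Min (f ` S) \<in> f ` S" using finite_states states_nonempty by simp
  then show ?thesis by (auto simp: state_min_def)
qed

lemma oscillation_nonneg: "0 \<le> oscillation f"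
  using state_min_attained[of f] le_state_max[of _ f] by (force simp: oscillation_def)

lemma state_max_lazy_iter_mono: "state_max (lazy_iter (k + n) f) \<le> state_max (lazy_iter n f)"
  by (auto simp: state_max_le_iff funpow_add intro!: lazy_iter_le le_state_max)

lemma state_min_lazy_iter_mono: "state_min (lazy_iter n f) \<le> state_min (lazy_iter (k + n) f)"
  by (auto simp: le_state_min_iff funpow_add intro!: lazy_iter_ge state_min_le)

lemma oscillation_lazy_iter_mono: "oscillation (lazy_iter (k + n) f) \<le> oscillation (lazy_iter n f)"
  using state_max_lazy_iter_mono state_min_lazy_iter_mono unfolding oscillation_def
  by (smt (verit))

text \<open>Doeblin's argument: if every state is reached from every state with probability at
  least \<open>\<delta>\<close>, then averaging pulls every value at least \<open>\<delta>\<close>-far towards both extremes.\<close>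

lemma oscillation_contraction:
  assumes doeblin: "\<forall>s\<in>S. \<forall>t\<in>S. \<delta> \<le> lazy_kernel R s t"
  shows "oscillation (lazy_iter R f) \<le> (1 - 2 * \<delta>) * oscillation f"
proof -
  obtain t0 where t0: "t0 \<in> S" "f t0 = state_min f" using state_min_attained by blast
  obtain t1 where t1: "t1 \<in> S" "f t1 = state_max f" using state_max_attained by blast
  have average_const: "(\<Sum>u\<in>S. c * lazy_kernel R s u) = c" if "s \<in> S" for s c
    using lazy_kernel_sum[OF that, of R] by (simp flip: sum_distrib_left)
  have upper: "\<delta> * oscillation f \<le> state_max f - lazy_iter R f s" if s: "s \<in> S" for s
  proof -
    have "\<delta> * oscillation f \<le> lazy_kernel R s t0 * (state_max f - f t0)"
      using doeblin s t0 oscillation_nonneg[of f]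
      by (auto simp: oscillation_def intro!: mult_right_mono)
    also have "\<dots> \<le> (\<Sum>u\<in>S. lazy_kernel R s u * (state_max f - f u))"
      using t0(1) finite_states le_state_max[of _ f] lazy_kernel_nonneg[OF s]
      by (intro member_le_sum) auto
    also have "\<dots> = (\<Sum>u\<in>S. state_max f * lazy_kernel R s u) - (\<Sum>u\<in>S. f u * lazy_kernel R s u)"
      by (simp add: algebra_simps sum_subtractf)
    also have "\<dots> = state_max f - lazy_iter R f s"
      by (simp add: average_const[OF s] lazy_iter_kernel[OF s])
    finally show ?thesis .
  qed
  have lower: "\<delta> * oscillation f \<le> lazy_iter R f s - state_min f" if s: "s \<in> S" for s
  proof -
    have "\<delta> * oscillation f \<le> lazy_kernel R s t1 * (f t1 - state_min f)"
      using doeblin s t1 oscillation_nonneg[of f]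
      by (auto simp: oscillation_def intro!: mult_right_mono)
    also have "\<dots> \<le> (\<Sum>u\<in>S. lazy_kernel R s u * (f u - state_min f))"
      using t1(1) finite_states state_min_le[of _ f] lazy_kernel_nonneg[OF s]
      by (intro member_le_sum) auto
    also have "\<dots> = (\<Sum>u\<in>S. f u * lazy_kernel R s u) - (\<Sum>u\<in>S. state_min f * lazy_kernel R s u)"
      by (simp add: algebra_simps sum_subtractf)
    also have "\<dots> = lazy_iter R f s - state_min f"
      by (simp add: average_const[OF s] lazy_iter_kernel[OF s])
    finally show ?thesis .
  qed
  have "state_max (lazy_iter R f) \<le> state_max f - \<delta> * oscillation f"
    using upper by (force simp: state_max_le_iff)
  moreover have "state_min f + \<delta> * oscillation f \<le> state_min (lazy_iter R f)"
    using lower by (force simp: le_state_min_iff)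
  ultimately show ?thesis by (simp add: oscillation_def algebra_simps)
qed

lemma oscillation_lazy_iter_decay:
  "\<exists>\<sigma> B. 0 < \<sigma> \<and> \<sigma> < 1 \<and> (\<forall>f n. oscillation (lazy_iter n f) \<le> B * \<sigma> ^ n * oscillation f)"
proof -
  obtain R \<delta> where R: "0 < R" and \<delta>: "0 < \<delta>" and doeblin: "\<forall>s\<in>S. \<forall>t\<in>S. \<delta> \<le> lazy_kernel R s t"
    using lazy_kernel_uniformly_pos by blast
  define \<rho> where "\<rho> = max (1 / 2) (1 - 2 * \<delta>)"
  have \<rho>: "0 < \<rho>" "\<rho> < 1" using \<delta> by (auto simp: \<rho>_def)
  have blocks: "oscillation (lazy_iter (q * R) f) \<le> \<rho> ^ q * oscillation f" for q f
  proof (induction q)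
    case (Suc q)
    have "oscillation (lazy_iter (Suc q * R) f) = oscillation (lazy_iter R (lazy_iter (q * R) f))"
      by (simp add: funpow_add)
    also have "\<dots> \<le> (1 - 2 * \<delta>) * oscillation (lazy_iter (q * R) f)"
      by (rule oscillation_contraction[OF doeblin])
    also have "\<dots> \<le> \<rho> * oscillation (lazy_iter (q * R) f)"
      by (intro mult_right_mono oscillation_nonneg) (simp add: \<rho>_def)
    also have "\<dots> \<le> \<rho> * (\<rho> ^ q * oscillation f)"
      using Suc \<rho> by (intro mult_left_mono) auto
    finally show ?case by simp
  qed simp
  define \<sigma> where "\<sigma> = root R \<rho>"
  have \<sigma>: "0 < \<sigma>" "\<sigma> < 1"
    using \<rho> R by (auto simp: \<sigma>_def real_root_lt_1_iff)
  have "oscillation (lazy_iter n f) \<le> (1 / \<rho>) * \<sigma> ^ n * oscillation f" for f n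
  proof -
    have "oscillation (lazy_iter n f) \<le> oscillation (lazy_iter (n div R * R) f)"
      using oscillation_lazy_iter_mono[of "n mod R" "n div R * R" f] by simp
    also have "\<dots> \<le> \<rho> ^ (n div R) * oscillation f"
      by (rule blocks)
    also have "\<dots> \<le> (1 / \<rho>) * \<sigma> ^ n * oscillation f"
      unfolding \<sigma>_def using \<rho> R
      by (intro mult_right_mono power_div_le_root_power oscillation_nonneg) auto
    finally show ?thesis .
  qed
  then show ?thesis
    using \<sigma> by blast
qed

definition equilibrium_value :: "('s \<Rightarrow> real) \<Rightarrow> real" where
  "equilibrium_value f = (INF n. state_max (lazy_iter n f))"

lemma state_min_le_state_max_lazy_iter: "state_min (lazy_iter n f) \<le> state_max (lazy_iter k f)"
proof -
  have "state_min (lazy_iter n f) \<le> state_min (lazy_iter (k + n) f)"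
    by (rule state_min_lazy_iter_mono)
  also have "\<dots> \<le> state_max (lazy_iter (n + k) f)"
    using oscillation_nonneg[of "lazy_iter (k + n) f"] by (simp add: oscillation_def add.commute)
  also have "\<dots> \<le> state_max (lazy_iter k f)"
    by (rule state_max_lazy_iter_mono)
  finally show ?thesis .
qed

lemma equilibrium_value_bounds:
  shows "state_min (lazy_iter n f) \<le> equilibrium_value f"
    and "equilibrium_value f \<le> state_max (lazy_iter n f)"
proof -
  have "bdd_below (range (\<lambda>k. state_max (lazy_iter k f)))"
    using state_min_le_state_max_lazy_iter by (intro bdd_belowI2)
  then show "equilibrium_value f \<le> state_max (lazy_iter n f)"
    unfolding equilibrium_value_def by (rule cINF_lower) simp
  show "state_min (lazy_iter n f) \<le> equilibrium_value f"
    unfolding equilibrium_value_def by (intro cINF_greatest state_min_le_state_max_lazy_iter) simp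
qed

lemma lazy_iter_equilibrium_dist:
  assumes "s \<in> S"
  shows "\<bar>lazy_iter n f s - equilibrium_value f\<bar> \<le> oscillation (lazy_iter n f)"
  using equilibrium_value_bounds[where n = n and f = f]
    le_state_max[OF assms, of "lazy_iter n f"] state_min_le[OF assms, of "lazy_iter n f"]
  by (simp add: oscillation_def abs_le_iff)

lemma lazy_iter_tendsto_equilibrium_value:
  assumes "s \<in> S"
  shows "(\<lambda>n. lazy_iter n f s) \<longlonglongrightarrow> equilibrium_value f"
proof -
  obtain \<sigma> B where \<sigma>: "0 < \<sigma>" "\<sigma> < 1"
    and decay: "\<And>n f. oscillation (lazy_iter n f) \<le> B * \<sigma> ^ n * oscillation f"
    using oscillation_lazy_iter_decay by blast
  have "(\<lambda>n. B * \<sigma> ^ n * oscillation f) \<longlonglongrightarrow> B * 0 * oscillation f"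
    using \<sigma> by (intro tendsto_intros LIMSEQ_power_zero) auto
  then have lim: "(\<lambda>n. B * \<sigma> ^ n * oscillation f) \<longlonglongrightarrow> 0"
    by simp
  have bound: "norm (lazy_iter n f s - equilibrium_value f) \<le> B * \<sigma> ^ n * oscillation f" for n
    using lazy_iter_equilibrium_dist[OF assms, of n f] decay[of n f] by simp
  have "(\<lambda>n. lazy_iter n f s - equilibrium_value f) \<longlonglongrightarrow> 0"
    by (rule Lim_null_comparison[OF always_eventually[OF allI[OF bound]] lim])
  then show ?thesis
    by (simp add: LIM_zero_iff)
qed

definition equilibrium :: "'s \<Rightarrow> real" where
  "equilibrium t = (if t \<in> S then equilibrium_value (indicator {t}) else 0)"

lemma equilibrium_value_eq_sum: "equilibrium_value f = (\<Sum>u\<in>S. f u * equilibrium u)"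
proof -
  obtain s where s: "s \<in> S" using states_nonempty by blast
  have "(\<lambda>n. \<Sum>u\<in>S. f u * lazy_kernel n s u) \<longlonglongrightarrow> (\<Sum>u\<in>S. f u * equilibrium_value (indicator {u}))"
    unfolding lazy_kernel_def
    by (intro tendsto_sum tendsto_mult_left lazy_iter_tendsto_equilibrium_value s)
  then have "(\<lambda>n. lazy_iter n f s) \<longlonglongrightarrow> (\<Sum>u\<in>S. f u * equilibrium u)"
    by (simp add: lazy_iter_kernel[OF s] equilibrium_def)
  with lazy_iter_tendsto_equilibrium_value[OF s] show ?thesis
    by (rule LIMSEQ_unique)
qed

lemma equilibrium_value_const: "equilibrium_value (\<lambda>_. a) = a"
proof -
  obtain s where s: "s \<in> S" using states_nonempty by blast
  from lazy_iter_tendsto_equilibrium_value[OF s, of "\<lambda>_. a"] show ?thesis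
    by (simp add: lazy_iter_const[OF s] LIMSEQ_const_iff)
qed

lemma equilibrium_value_lazy_step: "equilibrium_value (lazy_step f) = equilibrium_value f"
proof -
  obtain s where s: "s \<in> S" using states_nonempty by blast
  have "(\<lambda>n. lazy_iter n (lazy_step f) s) \<longlonglongrightarrow> equilibrium_value f"
    using LIMSEQ_Suc[OF lazy_iter_tendsto_equilibrium_value[OF s, of f]]
    unfolding funpow_Suc_right comp_def .
  with lazy_iter_tendsto_equilibrium_value[OF s] show ?thesis
    by (rule LIMSEQ_unique)
qed

lemma equilibrium_is_stationary: "is_stationary S P equilibrium"
proof -
  obtain s0 where s0: "s0 \<in> S" using states_nonempty by blast
  have nonneg: "0 \<le> equilibrium t" for t
    using LIMSEQ_le_const[OF lazy_iter_tendsto_equilibrium_value[OF s0, of "indicator {t}"]]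
      lazy_iter_ge[OF _ s0, of 0 "indicator {t}"]
    by (simp add: equilibrium_def)
  have stationary: "(\<Sum>u\<in>S. equilibrium u * P u t) = equilibrium t" if t: "t \<in> S" for t
  proof -
    have "equilibrium t = equilibrium_value (lazy_step (indicator {t}))"
      using t by (simp add: equilibrium_value_lazy_step equilibrium_def)
    also have "\<dots> = (\<Sum>u\<in>S. (indicator {t} u + P u t) / 2 * equilibrium u)"
      using t finite_states by (simp add: equilibrium_value_eq_sum lazy_step_def indicator_def)
    also have "\<dots> = (equilibrium t + (\<Sum>u\<in>S. equilibrium u * P u t)) / 2"
      using t finite_states
      by (simp add: indicator_def if_distrib sum.delta' sum.distrib algebra_simps
          flip: sum_divide_distrib cong: if_cong)
    finally show ?thesis by simp
  qed
  have "(\<Sum>u\<in>S. equilibrium u) = 1"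
    using equilibrium_value_eq_sum[of "\<lambda>_. 1"] equilibrium_value_const[of 1] by simp
  moreover have "\<forall>s. s \<notin> S \<longrightarrow> equilibrium s = 0"
    by (simp add: equilibrium_def)
  ultimately show ?thesis
    using nonneg stationary unfolding is_stationary_def by blast
qed

lemma stationary_unique:
  assumes "is_stationary S P m"
  shows "m = equilibrium"
proof
  fix t
  have m_lazy_step: "(\<Sum>u\<in>S. m u * lazy_step f u) = (\<Sum>u\<in>S. m u * f u)" for f
  proof -
    have "(\<Sum>u\<in>S. m u * lazy_step f u)
        = ((\<Sum>u\<in>S. m u * f u) + (\<Sum>u\<in>S. \<Sum>t\<in>S. m u * (P u t * f t))) / 2"
      by (simp add: lazy_step_def distrib_left sum_distrib_left sum.distrib flip: sum_divide_distrib)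
    also have "(\<Sum>u\<in>S. \<Sum>t\<in>S. m u * (P u t * f t)) = (\<Sum>t\<in>S. (\<Sum>u\<in>S. m u * P u t) * f t)"
      by (subst sum.swap) (simp add: sum_distrib_right mult.assoc)
    also have "\<dots> = (\<Sum>t\<in>S. m t * f t)"
      using assms by (simp add: is_stationary_def)
    finally show ?thesis by simp
  qed
  have "(\<lambda>n. \<Sum>u\<in>S. m u * lazy_iter n f u) \<longlonglongrightarrow> (\<Sum>u\<in>S. m u * equilibrium_value f)" for f
    by (intro tendsto_sum tendsto_mult_left lazy_iter_tendsto_equilibrium_value) auto
  moreover have "(\<Sum>u\<in>S. m u * lazy_iter n f u) = (\<Sum>u\<in>S. m u * f u)" for n f
    by (induction n) (simp_all add: m_lazy_step)
  ultimately have "(\<Sum>u\<in>S. m u * f u) = equilibrium_value f" for f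
    using assms by (simp add: LIMSEQ_const_iff is_stationary_def flip: sum_distrib_right)
  from this[of "indicator {t}"] show "m t = equilibrium t"
    using assms finite_states by (auto simp: equilibrium_def is_stationary_def indicator_def)
qed

lemma stationary_dist_eq_equilibrium: "stationary_dist S P = equilibrium"
  unfolding stationary_dist_def
  using equilibrium_is_stationary stationary_unique by (rule the_equality)

lemma lazy_step_sums:
  assumes "\<And>t. t \<in> S \<Longrightarrow> (\<lambda>n. F n t) sums G t" and "s \<in> S"
  shows "(\<lambda>n. lazy_step (F n) s) sums lazy_step G s"
  unfolding lazy_step_def using assms by (intro sums_divide sums_add sums_sum sums_mult) auto

lemma poisson_equation_solvable:
  assumes "(\<Sum>u\<in>S. g u * stationary_dist S P u) = 0"
  obtains h where "\<And>s. s \<in> S \<Longrightarrow> h s - (\<Sum>t\<in>S. P s t * h t) = g s"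
proof -
  obtain \<sigma> B where \<sigma>: "0 < \<sigma>" "\<sigma> < 1"
    and decay: "\<And>n f. oscillation (lazy_iter n f) \<le> B * \<sigma> ^ n * oscillation f"
    using oscillation_lazy_iter_decay by blast
  define h where "h s = (\<Sum>n. lazy_iter n g s)" for s
  have "equilibrium_value g = 0"
    using assms by (simp add: equilibrium_value_eq_sum stationary_dist_eq_equilibrium)
  then have bound: "norm (lazy_iter n g s) \<le> B * oscillation g * \<sigma> ^ n" if "s \<in> S" for n s
    using lazy_iter_equilibrium_dist[OF that, of n g] decay[of n g] by (simp add: mult_ac)
  have "summable (\<lambda>n. B * oscillation g * \<sigma> ^ n)"
    using \<sigma> by (intro summable_mult summable_geometric) simp
  then have "summable (\<lambda>n. lazy_iter n g s)" if "s \<in> S" for s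
    by (rule summable_comparison_test'[where N = 0]) (rule bound[OF that])
  then have sums: "(\<lambda>n. lazy_iter n g s) sums h s" if "s \<in> S" for s
    unfolding h_def using that by (blast intro: summable_sums)
  have "h s - lazy_step h s = g s" if s: "s \<in> S" for s
  proof -
    have "(\<lambda>n. lazy_iter (Suc n) g s) sums lazy_step h s"
      using lazy_step_sums[OF sums s] by simp
    moreover have "(\<lambda>n. lazy_iter (Suc n) g s) sums (h s - g s)"
      using sums[OF s] sums_Suc_iff[of "\<lambda>n. lazy_iter n g s" "h s - g s"] by simp
    ultimately show ?thesis
      using sums_unique2 by fastforce
  qed
  then show ?thesis
    by (intro that[of "\<lambda>s. h s / 2"]) (simp add: lazy_step_def field_simps flip: sum_divide_distrib)
qed

end

section \<open>Occurrences of words\<close>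

lemma length_walk [simp]: "length (walk X n \<omega>) = n"
  by (simp add: walk_def)

lemma walk_0 [simp]: "walk X 0 \<omega> = []"
  by (simp add: walk_def)

lemma walk_Suc: "walk X (Suc n) \<omega> = walk X n \<omega> @ [X (Suc n) \<omega>]"
  by (simp add: walk_def)

lemma take_walk: "m \<le> n \<Longrightarrow> take m (walk X n \<omega>) = walk X m \<omega>"
  by (simp add: walk_def take_map)

lemma path_weight_snoc:
  assumes "s \<noteq> []" "set s \<subseteq> S" "t \<in> S"
  shows "path_weight S P m (s @ [t]) = path_weight S P m s * P (last s) t"
proof -
  obtain k where k: "length s = Suc k" using assms(1) by (cases s) auto
  have "(\<Prod>i<k. P ((s @ [t]) ! i) ((s @ [t]) ! Suc i)) = (\<Prod>i<k. P (s ! i) (s ! Suc i))"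
    using k by (intro prod.cong) (auto simp: nth_append)
  then have "(\<Prod>i<Suc k. P ((s @ [t]) ! i) ((s @ [t]) ! Suc i))
      = (\<Prod>i<k. P (s ! i) (s ! Suc i)) * P (last s) t"
    using k assms(1) by (simp add: nth_append last_conv_nth)
  then show ?thesis
    using assms k by (simp add: path_weight_def)
qed

definition lin_occ :: "'e list \<Rightarrow> 'e list \<Rightarrow> nat" where
  "lin_occ w v = card {i. i + length v \<le> length w \<and> (\<forall>j<length v. w ! (i + j) = v ! j)}"

lemma suffix_iff_nth:
  "suffix v u \<longleftrightarrow> length v \<le> length u \<and> (\<forall>j<length v. u ! (length u - length v + j) = v ! j)"
proof -
  have "suffix v u \<longleftrightarrow> length v \<le> length u \<and> drop (length u - length v) u = v"
    by (metis suffix_drop suffix_length_le suffix_take append_take_drop_id same_append_eq suffix_def)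
  then show ?thesis
    by (auto simp: list_eq_iff_nth_eq)
qed

lemma lin_occ_Nil: "v \<noteq> [] \<Longrightarrow> lin_occ [] v = 0"
  by (simp add: lin_occ_def)

lemma lin_occ_snoc:
  assumes "v \<noteq> []"
  shows "lin_occ (w @ [x]) v = lin_occ w v + of_bool (suffix v (w @ [x]))"
proof -
  define k where "k = length v"
  define occ where "occ u = {i. i + k \<le> length u \<and> (\<forall>j<k. u ! (i + j) = v ! j)}" for u
  have "occ (w @ [x]) = occ w \<union>
      {i. k \<le> Suc (length w) \<and> i = Suc (length w) - k \<and> (\<forall>j<k. (w @ [x]) ! (i + j) = v ! j)}"
    by (auto simp: occ_def nth_append)
  also have "{i. k \<le> Suc (length w) \<and> i = Suc (length w) - k \<and> (\<forall>j<k. (w @ [x]) ! (i + j) = v ! j)}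
      = (if suffix v (w @ [x]) then {Suc (length w) - k} else {})"
    by (auto simp: suffix_iff_nth k_def)
  finally have "occ (w @ [x]) = occ w \<union> (if suffix v (w @ [x]) then {Suc (length w) - k} else {})" .
  moreover have "finite (occ w)"
    by (rule finite_subset[of _ "{..length w}"]) (auto simp: occ_def)
  moreover have "Suc (length w) - k \<notin> occ w"
    using assms by (auto simp: occ_def k_def)
  ultimately have "card (occ (w @ [x])) = card (occ w) + of_bool (suffix v (w @ [x]))"
    by (auto simp del: suffix_snoc)
  then show ?thesis
    by (simp add: lin_occ_def occ_def k_def del: suffix_snoc)
qed

lemma cyc_occ_append_bounds:
  assumes "v \<noteq> []"
  shows "lin_occ W v \<le> cyc_occ (W @ B) v"
    and "cyc_occ (W @ B) v \<le> lin_occ W v + length B + length v"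
proof -
  define A where "A = {i. i < length (W @ B) \<and>
      (\<forall>j<length v. (W @ B) ! ((i + j) mod length (W @ B)) = v ! j)}"
  define L where "L = {i. i + length v \<le> length W \<and> (\<forall>j<length v. W ! (i + j) = v ! j)}"
  have short: "i < length W" if "i + length v \<le> length W" for i
    using assms that by (cases v) auto
  have L_eq: "L = {i \<in> A. i + length v \<le> length W}"
    by (auto simp: A_def L_def nth_append dest: short)
  define I where "I = {length W + 1 - length v..<length (W @ B)}"
  have "L \<subseteq> A" "A \<subseteq> L \<union> I"
    using L_eq by (auto simp: A_def I_def dest: short)
  moreover have "finite A" "finite L" "finite I"
    using \<open>L \<subseteq> A\<close> by (auto simp: A_def I_def intro: finite_subset)
  ultimately have "card L \<le> card A" "card A \<le> card L + card I"
    using card_Un_le[of L I] card_mono[of "L \<union> I" A] by (auto intro: card_mono)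
  moreover have "card I \<le> length B + length v"
    by (simp add: I_def)
  moreover have "lin_occ W v = card L" "cyc_occ (W @ B) v = card A"
    by (simp_all add: lin_occ_def cyc_occ_def L_def A_def)
  ultimately show "lin_occ W v \<le> cyc_occ (W @ B) v"
    and "cyc_occ (W @ B) v \<le> lin_occ W v + length B + length v"
    by linarith+
qed

lemma lin_occ_walk:
  assumes "v \<noteq> []"
  shows "real (lin_occ (walk X n \<omega>) v) = (\<Sum>m<n. of_bool (suffix v (walk X (Suc m) \<omega>)))"
  by (induction n) (simp_all add: walk_Suc lin_occ_snoc[OF assms] lin_occ_Nil[OF assms])

lemma closing_paths_length_bounded:
  fixes \<beta> :: "'e::finite \<Rightarrow> 'e \<Rightarrow> 'e list"
  obtains C where "\<And>e e'. length (\<beta> e e') \<le> C"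
proof
  show "length (\<beta> e e') \<le> Max (range (\<lambda>(e, e'). length (\<beta> e e')))" for e e'
    by (rule Max_ge) (auto intro: image_eqI[of _ _ "(e, e')"])
qed

lemma cyc_occ_closing_deviation:
  assumes "v \<noteq> []" and "\<And>e e'. length (\<beta> e e') \<le> C"
  shows "\<bar>real (cyc_occ (closing \<beta> W) v) - real (lin_occ W v)\<bar> \<le> real (C + length v)"
  using cyc_occ_append_bounds[OF assms(1), of W "\<beta> (last W) (hd W)"] assms(2)[of "last W" "hd W"]
  by (simp add: closing_def)

section \<open>Walks driven by a Markov chain\<close>

locale markov_walk = prob_space M
  for M :: "'a measure" +
  fixes S :: "'e::finite set" and P :: "'e \<Rightarrow> 'e \<Rightarrow> real" and \<mu> :: "'e \<Rightarrow> real"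
    and X :: "nat \<Rightarrow> 'a \<Rightarrow> 'e"
  assumes random_state: "\<And>n. X n \<in> measurable M (count_space UNIV)"
    and cylinder_prob: "\<And>n s. 1 \<le> n \<Longrightarrow> length s = n \<Longrightarrow>
      prob {\<omega> \<in> space M. \<forall>i<n. X (Suc i) \<omega> = s ! i} = path_weight S P \<mu> s"
begin

definition state_paths :: "nat \<Rightarrow> 'e list set" where
  "state_paths n = {s. set s \<subseteq> S \<and> length s = n}"

lemma walk_event: "{\<omega> \<in> space M. walk X n \<omega> = s} \<in> events"
proof (cases "length s = n")
  case True
  have "{\<omega> \<in> space M. \<forall>i\<in>{..<n}. X (Suc i) \<omega> = s ! i} \<in> events"
    using random_state by measurable
  moreover have "{\<omega> \<in> space M. walk X n \<omega> = s} = {\<omega> \<in> space M. \<forall>i\<in>{..<n}. X (Suc i) \<omega> = s ! i}"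
    using True by (auto simp: walk_def list_eq_iff_nth_eq)
  ultimately show ?thesis by simp
next
  case False
  then have "{\<omega> \<in> space M. walk X n \<omega> = s} = {}"
    by (auto dest: arg_cong[of _ _ length])
  then show ?thesis by (simp only: sets.empty_sets)
qed

lemma walk_measurable: "walk X n \<in> measurable M (count_space UNIV)"
  using walk_event[of n]
  by (subst measurable_count_space_eq_countable) (auto simp: vimage_def Int_def conj_commute)

lemma prob_walk_eq:
  "1 \<le> n \<Longrightarrow> length s = n \<Longrightarrow> prob {\<omega> \<in> space M. walk X n \<omega> = s} = path_weight S P \<mu> s"
  using cylinder_prob[of n s] by (simp add: walk_def list_eq_iff_nth_eq cong: conj_cong)

lemma walk_simple_function:
  fixes F :: "'e list \<Rightarrow> real"
  assumes "\<omega> \<in> space M"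
  shows "F (walk X n \<omega>) = (\<Sum>s | length s = n. F s * indicator {\<omega> \<in> space M. walk X n \<omega> = s} \<omega>)"
proof -
  have "(\<Sum>s | length s = n. F s * indicator {\<omega> \<in> space M. walk X n \<omega> = s} \<omega>)
      = (\<Sum>s | length s = n. if s = walk X n \<omega> then F (walk X n \<omega>) else 0)"
    using assms by (intro sum.cong) (auto simp: indicator_def)
  also have "\<dots> = F (walk X n \<omega>)"
    using finite_list_length[of n] by (subst sum.delta) auto
  finally show ?thesis ..
qed

lemma integrable_walk_indicator:
  "integrable M (indicator {\<omega> \<in> space M. walk X n \<omega> = s} :: 'a \<Rightarrow> real)"
  using walk_event by (intro integrable_real_indicator) (auto simp: less_top[symmetric])

lemma integrable_walk:
  fixes F :: "'e list \<Rightarrow> real"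
  shows "integrable M (\<lambda>\<omega>. F (walk X n \<omega>))"
proof -
  have "integrable M (\<lambda>\<omega>. \<Sum>s | length s = n. F s * indicator {\<omega> \<in> space M. walk X n \<omega> = s} \<omega>)"
    by (intro Bochner_Integration.integrable_sum integrable_mult_right integrable_walk_indicator)
  moreover have "integrable M (\<lambda>\<omega>. F (walk X n \<omega>))
      = integrable M (\<lambda>\<omega>. \<Sum>s | length s = n. F s * indicator {\<omega> \<in> space M. walk X n \<omega> = s} \<omega>)"
    by (rule Bochner_Integration.integrable_cong) (auto intro: walk_simple_function)
  ultimately show ?thesis by simp
qed

lemma integral_walk:
  fixes F :: "'e list \<Rightarrow> real"
  assumes "1 \<le> n"
  shows "(\<integral>\<omega>. F (walk X n \<omega>) \<partial>M) = (\<Sum>s\<in>state_paths n. F s * path_weight S P \<mu> s)"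
proof -
  have "(\<integral>\<omega>. F (walk X n \<omega>) \<partial>M)
      = (\<integral>\<omega>. (\<Sum>s | length s = n. F s * indicator {\<omega> \<in> space M. walk X n \<omega> = s} \<omega>) \<partial>M)"
    by (rule Bochner_Integration.integral_cong) (simp_all add: walk_simple_function)
  also have "\<dots> = (\<Sum>s | length s = n. F s * prob {\<omega> \<in> space M. walk X n \<omega> = s})"
    using walk_event integrable_walk_indicator by (subst Bochner_Integration.integral_sum) auto
  also have "\<dots> = (\<Sum>s | length s = n. F s * path_weight S P \<mu> s)"
    using assms by (intro sum.cong) (auto simp: prob_walk_eq)
  also have "\<dots> = (\<Sum>s\<in>state_paths n. F s * path_weight S P \<mu> s)"
    using finite_list_length[of n]
    by (intro sum.mono_neutral_right) (auto simp: state_paths_def path_weight_def)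
  finally show ?thesis .
qed

lemma AE_walk_in_states: "AE \<omega> in M. \<forall>m\<ge>1. X m \<omega> \<in> S"
  unfolding AE_all_countable
proof
  fix m :: nat
  show "AE \<omega> in M. 1 \<le> m \<longrightarrow> X m \<omega> \<in> S"
  proof (cases "1 \<le> m")
    case True
    define F :: "'e list \<Rightarrow> real" where "F s = of_bool (last s \<notin> S)" for s
    have last_in_states: "last s \<in> S" if "s \<in> state_paths m" for s
      using that True by (cases s) (auto simp: state_paths_def)
    have "(\<integral>\<omega>. F (walk X m \<omega>) \<partial>M) = (\<Sum>s\<in>state_paths m. F s * path_weight S P \<mu> s)"
      by (rule integral_walk[OF True])
    also have "\<dots> = 0"
      using last_in_states by (simp add: F_def)
    finally have "(\<integral>\<omega>. F (walk X m \<omega>) \<partial>M) = 0" .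
    then have "AE \<omega> in M. F (walk X m \<omega>) = 0"
      using integrable_walk by (subst integral_nonneg_eq_0_iff_AE[symmetric]) (auto simp: F_def)
    moreover have "last (walk X m \<omega>) = X m \<omega>" for \<omega>
      using True by (cases m) (auto simp: walk_Suc)
    ultimately show ?thesis
      by (auto simp: F_def)
  qed simp
qed

lemma sum_state_paths_Suc: "(\<Sum>s\<in>state_paths (Suc n). G s) = (\<Sum>s\<in>state_paths n. \<Sum>t\<in>S. G (s @ [t]))"
proof -
  have "state_paths (Suc n) = (\<lambda>(s, t). s @ [t]) ` (state_paths n \<times> S)"
    by (auto simp: state_paths_def image_iff length_Suc_conv_rev)
  moreover have "inj_on (\<lambda>(s, t). s @ [t]) (state_paths n \<times> S)"
    by (auto simp: inj_on_def)
  ultimately show ?thesis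
    by (simp add: sum.reindex sum.cartesian_product prod.case_distrib)
qed

text \<open>\<open>E[F(W\<^sub>n\<^sub>+\<^sub>1) | W\<^sub>n] = 0\<close> for the walk of the chain \<open>P\<close>.\<close>

definition martingale_increment :: "('e list \<Rightarrow> real) \<Rightarrow> bool" where
  "martingale_increment F \<longleftrightarrow>
     (\<forall>s. s \<noteq> [] \<longrightarrow> set s \<subseteq> S \<longrightarrow> (\<Sum>t\<in>S. P (last s) t * F (s @ [t])) = 0)"

lemma integral_martingale_increments_orthogonal:
  assumes F: "martingale_increment F" and ij: "1 \<le> i" "i < j"
  shows "(\<integral>\<omega>. F (walk X i \<omega>) * F (walk X j \<omega>) \<partial>M) = 0"
proof -
  obtain m where m: "j = Suc m" "i \<le> m" using ij by (cases j) auto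
  have "(\<integral>\<omega>. F (walk X i \<omega>) * F (walk X j \<omega>) \<partial>M)
      = (\<integral>\<omega>. F (take i (walk X j \<omega>)) * F (walk X j \<omega>) \<partial>M)"
    using ij by (simp add: take_walk)
  also have "\<dots> = (\<Sum>s\<in>state_paths (Suc m). F (take i s) * F s * path_weight S P \<mu> s)"
    using integral_walk[of j "\<lambda>s. F (take i s) * F s"] ij m by simp
  also have "\<dots> = (\<Sum>s\<in>state_paths m. \<Sum>t\<in>S.
      F (take i (s @ [t])) * F (s @ [t]) * path_weight S P \<mu> (s @ [t]))"
    by (rule sum_state_paths_Suc)
  also have "\<dots> = (\<Sum>s\<in>state_paths m.
      F (take i s) * path_weight S P \<mu> s * (\<Sum>t\<in>S. P (last s) t * F (s @ [t])))"
  proof (intro sum.cong refl)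
    fix s assume s: "s \<in> state_paths m"
    then have "s \<noteq> []" "set s \<subseteq> S" "length s = m" using ij m by (auto simp: state_paths_def)
    then show "(\<Sum>t\<in>S. F (take i (s @ [t])) * F (s @ [t]) * path_weight S P \<mu> (s @ [t]))
        = F (take i s) * path_weight S P \<mu> s * (\<Sum>t\<in>S. P (last s) t * F (s @ [t]))"
      using m by (auto simp: sum_distrib_left path_weight_snoc intro!: sum.cong)
  qed
  also have "\<dots> = 0"
  proof (intro sum.neutral ballI)
    fix s assume "s \<in> state_paths m"
    then have "s \<noteq> []" "set s \<subseteq> S" using ij m by (auto simp: state_paths_def)
    with F show "F (take i s) * path_weight S P \<mu> s * (\<Sum>t\<in>S. P (last s) t * F (s @ [t])) = 0"
      by (simp add: martingale_increment_def)
  qed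
  finally show ?thesis .
qed

lemma AE_martingale_averages_tendsto_zero:
  assumes F: "martingale_increment F" and bounded: "\<And>s. \<bar>F s\<bar> \<le> c"
  shows "AE \<omega> in M. (\<lambda>n. (\<Sum>m<n. F (walk X (Suc m) \<omega>)) / real n) \<longlonglongrightarrow> 0"
proof (rule AE_averages_tendsto_zero_if_orthogonal)
  show "(\<lambda>\<omega>. F (walk X (Suc m) \<omega>)) \<in> borel_measurable M" for m
    using walk_measurable by (rule measurable_compose) simp
  show "(\<integral>\<omega>. F (walk X (Suc i) \<omega>) * F (walk X (Suc j) \<omega>) \<partial>M) = 0" if "i \<noteq> j" for i j
    using that integral_martingale_increments_orthogonal[OF F, of "Suc i" "Suc j"]
      integral_martingale_increments_orthogonal[OF F, of "Suc j" "Suc i"]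
    by (cases "i < j") (auto simp: mult.commute)
qed (rule bounded)

end

section \<open>Frequencies of words along the walk\<close>

lemma pcurr_converges_if_cyclic_frequencies:
  assumes "\<And>v. v \<noteq> [] \<Longrightarrow>
    (\<lambda>n. real (cyc_occ (w n) v) / real (Suc n)) \<longlonglongrightarrow> path_weight S P (stationary_dist S P) v"
  shows "pcurr_converges orig iv (\<lambda>n. counting_current iv (w n)) (char_current iv S P)"
  unfolding pcurr_converges_def
proof (intro exI[of _ "\<lambda>n. 1 / real (Suc n)"] conjI allI impI)
  fix v assume "v \<noteq> [] \<and> reduced_path orig iv v"
  then have "v \<noteq> []" "inv_path iv v \<noteq> []" by (auto simp: inv_path_def)
  from tendsto_add[OF assms[OF this(1)] assms[OF this(2)]]
  show "(\<lambda>n. 1 / real (Suc n) * counting_current iv (w n) v) \<longlonglongrightarrow> char_current iv S P v"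
    by (simp add: counting_current_def char_current_def add_divide_distrib)
qed simp

lemma finite_fun_abs_bounded: "\<exists>c. \<forall>x::'a::finite. \<bar>f x\<bar> \<le> (c::real)"
  by (intro exI[of _ "Max (range (\<lambda>x. \<bar>f x\<bar>))"] allI Max_ge) auto

locale irreducible_markov_walk = markov_walk M S P \<mu> X + irreducible_markov_chain S P
  for M :: "'a measure" and S :: "'e::finite set" and P \<mu> X
begin

lemma stationary_dist_is_stationary: "is_stationary S P (stationary_dist S P)"
  by (simp add: stationary_dist_eq_equilibrium equilibrium_is_stationary)

text \<open>Evaluated at \<open>W\<^sub>n\<^sub>+\<^sub>1\<close> this is \<open>H(X\<^sub>n\<^sub>+\<^sub>1) - (P H)(X\<^sub>n)\<close>, and \<open>H(X\<^sub>1)\<close> for \<open>n = 0\<close>.\<close>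

definition transition_increment :: "('e \<Rightarrow> real) \<Rightarrow> 'e list \<Rightarrow> real" where
  "transition_increment H s =
     H (last s) - (if 2 \<le> length s then (\<Sum>t\<in>S. P (last (butlast s)) t * H t) else 0)"

lemma martingale_increment_transition_increment: "martingale_increment (transition_increment H)"
  unfolding martingale_increment_def
proof (intro allI impI)
  fix s :: "'e list" assume "s \<noteq> []" "set s \<subseteq> S"
  then have "last s \<in> S" by auto
  have "(\<Sum>t\<in>S. P (last s) t * transition_increment H (s @ [t]))
      = (\<Sum>t\<in>S. P (last s) t * H t) - (\<Sum>t\<in>S. P (last s) t) * (\<Sum>t\<in>S. P (last s) t * H t)"
    using \<open>s \<noteq> []\<close> by (cases s) (simp_all add: transition_increment_def algebra_simps sum_subtractf
        sum_distrib_right)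
  then show "(\<Sum>t\<in>S. P (last s) t * transition_increment H (s @ [t])) = 0"
    using transition_row_sum[OF \<open>last s \<in> S\<close>] by simp
qed

lemma sum_transition_increment_walk:
  "(\<Sum>m<n. transition_increment H (walk X (Suc m) \<omega>))
     = (\<Sum>m<n. H (X (Suc m) \<omega>) - (\<Sum>t\<in>S. P (X (Suc m) \<omega>) t * H t))
       + (if n = 0 then 0 else (\<Sum>t\<in>S. P (X n \<omega>) t * H t))"
proof (induction n)
  case (Suc n)
  have "transition_increment H (walk X (Suc n) \<omega>)
      = H (X (Suc n) \<omega>) - (if n = 0 then 0 else (\<Sum>t\<in>S. P (X n \<omega>) t * H t))"
    by (cases n) (simp_all add: transition_increment_def walk_Suc butlast_append)
  with Suc.IH show ?case by simp
qed simp

lemma sum_poisson_deviation: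
  assumes "\<And>s. s \<in> S \<Longrightarrow> H s - (\<Sum>t\<in>S. P s t * H t) = f s - c"
    and "\<forall>m\<ge>1. X m \<omega> \<in> S"
  shows "(\<Sum>m<n. f (X (Suc m) \<omega>)) - ((\<Sum>m<n. transition_increment H (walk X (Suc m) \<omega>)) + real n * c)
    = - (if n = 0 then 0 else (\<Sum>t\<in>S. P (X n \<omega>) t * H t))"
proof -
  have "(\<Sum>m<n. H (X (Suc m) \<omega>) - (\<Sum>t\<in>S. P (X (Suc m) \<omega>) t * H t)) = (\<Sum>m<n. f (X (Suc m) \<omega>) - c)"
    using assms by simp
  then show ?thesis
    by (simp add: sum_transition_increment_walk sum_subtractf)
qed

text \<open>A solution \<open>H\<close> of the Poisson equation \<open>H - P H = f - \<pi>(f)\<close> turns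
  the centred sum of \<open>f\<close> along the walk into a sum of martingale increments plus a bounded
  error.\<close>

lemma AE_ergodic_average:
  "AE \<omega> in M. (\<lambda>n. (\<Sum>m<n. f (X (Suc m) \<omega>)) / real n) \<longlonglongrightarrow> (\<Sum>u\<in>S. f u * stationary_dist S P u)"
proof -
  define c where "c = (\<Sum>u\<in>S. f u * stationary_dist S P u)"
  have "(\<Sum>u\<in>S. (f u - c) * stationary_dist S P u) = 0"
    using stationary_dist_is_stationary
    by (simp add: c_def left_diff_distrib sum_subtractf is_stationary_def flip: sum_distrib_left)
  then obtain H where H: "\<And>s. s \<in> S \<Longrightarrow> H s - (\<Sum>t\<in>S. P s t * H t) = f s - c"
    using poisson_equation_solvable[of "\<lambda>u. f u - c"] by blast
  define PH where "PH x = (\<Sum>t\<in>S. P x t * H t)" for x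
  obtain c1 c2 where c1: "\<And>x. \<bar>H x\<bar> \<le> c1" and c2: "\<And>x. \<bar>PH x\<bar> \<le> c2"
    using finite_fun_abs_bounded by metis
  have "\<bar>transition_increment H s\<bar> \<le> c1 + c2" for s
    using c1[of "last s"] c2[of "last (butlast s)"] c2[of undefined]
    by (auto simp: transition_increment_def PH_def)
  with martingale_increment_transition_increment
  have "AE \<omega> in M. (\<lambda>n. (\<Sum>m<n. transition_increment H (walk X (Suc m) \<omega>)) / real n) \<longlonglongrightarrow> 0"
    by (rule AE_martingale_averages_tendsto_zero)
  then show ?thesis
    using AE_walk_in_states
  proof eventually_elim
    case (elim \<omega>)
    have "\<bar>(\<Sum>m<n. f (X (Suc m) \<omega>))
        - ((\<Sum>m<n. transition_increment H (walk X (Suc m) \<omega>)) + real n * c)\<bar> \<le> c2" for n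
      using sum_poisson_deviation[OF H elim(2)] c2[of "X n \<omega>"]
      by (simp add: PH_def order_trans[OF abs_ge_zero])
    moreover have "(\<lambda>n. real n * c / real n) \<longlonglongrightarrow> c"
      by (rule Lim_transform_eventually[OF tendsto_const])
        (simp add: eventually_sequentially exI[of _ 1])
    with elim(1) have
      "(\<lambda>n. ((\<Sum>m<n. transition_increment H (walk X (Suc m) \<omega>)) + real n * c) / real n) \<longlonglongrightarrow> c"
      by (simp add: add_divide_distrib tendsto_add[where a = 0, simplified])
    ultimately show ?case
      unfolding c_def by (rule LIMSEQ_div_if_bounded_difference[rotated])
  qed
qed

lemma AE_state_frequency:
  assumes "a \<in> S"
  shows "AE \<omega> in M. (\<lambda>n. real (lin_occ (walk X n \<omega>) [a]) / real n) \<longlonglongrightarrow> stationary_dist S P a"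
proof -
  have "real (lin_occ (walk X n \<omega>) [a]) = (\<Sum>m<n. indicator {a} (X (Suc m) \<omega>))" for n \<omega>
    by (simp add: lin_occ_walk walk_Suc indicator_def eq_commute)
  moreover have "(\<Sum>u\<in>S. indicator {a} u * stationary_dist S P u) = stationary_dist S P a"
    using assms finite_states by (simp add: indicator_def if_distrib sum.delta cong: if_cong)
  ultimately show ?thesis
    using AE_ergodic_average[of "indicator {a}"] by simp
qed

lemma martingale_increment_suffix_snoc:
  assumes "w \<noteq> []" and "b \<in> S"
  shows "martingale_increment
    (\<lambda>s. of_bool (suffix (w @ [b]) s) - P (last w) b * of_bool (suffix w (butlast s)))"
  unfolding martingale_increment_def
proof (intro allI impI)
  fix s :: "'e list" assume "s \<noteq> []" "set s \<subseteq> S"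
  then have "last s \<in> S" by auto
  have "of_bool (suffix (w @ [b]) (s @ [t])) - P (last w) b * of_bool (suffix w (butlast (s @ [t])))
      = of_bool (suffix w s) * (indicator {b} t - P (last w) b)" for t
    by (auto simp: indicator_def)
  then have "(\<Sum>t\<in>S. P (last s) t * (of_bool (suffix (w @ [b]) (s @ [t]))
        - P (last w) b * of_bool (suffix w (butlast (s @ [t])))))
      = of_bool (suffix w s) * ((\<Sum>t\<in>S. P (last s) t * indicator {b} t)
        - P (last w) b * (\<Sum>t\<in>S. P (last s) t))"
    by (simp only:) (simp add: algebra_simps sum_subtractf sum_distrib_left)
  also have "(\<Sum>t\<in>S. P (last s) t * indicator {b} t) = P (last s) b"
    using assms(2) finite_states by (simp add: indicator_def if_distrib sum.delta cong: if_cong)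
  also have "of_bool (suffix w s) * (P (last s) b - P (last w) b * (\<Sum>t\<in>S. P (last s) t)) = 0"
    using transition_row_sum[OF \<open>last s \<in> S\<close>] assms(1) by (auto simp: suffix_def)
  finally show "(\<Sum>t\<in>S. P (last s) t * (of_bool (suffix (w @ [b]) (s @ [t]))
      - P (last w) b * of_bool (suffix w (butlast (s @ [t]))))) = 0" .
qed

text \<open>Occurrences of \<open>w b\<close> minus \<open>P(last w, b)\<close> times occurrences of \<open>w\<close> form a martingale.\<close>

lemma AE_pattern_frequency_snoc:
  assumes w: "w \<noteq> []" "set w \<subseteq> S" and b: "b \<in> S"
    and freq: "AE \<omega> in M. (\<lambda>n. real (lin_occ (walk X n \<omega>) w) / real n)
      \<longlonglongrightarrow> path_weight S P (stationary_dist S P) w"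
  shows "AE \<omega> in M. (\<lambda>n. real (lin_occ (walk X n \<omega>) (w @ [b])) / real n)
      \<longlonglongrightarrow> path_weight S P (stationary_dist S P) (w @ [b])"
proof -
  define p where "p = P (last w) b"
  define F where "F s = of_bool (suffix (w @ [b]) s) - p * of_bool (suffix w (butlast s))" for s
  have "\<bar>F s\<bar> \<le> 1 + \<bar>p\<bar>" for s
    by (simp add: F_def abs_le_iff abs_if)
  with martingale_increment_suffix_snoc[OF w(1) b]
  have "AE \<omega> in M. (\<lambda>n. (\<Sum>m<n. F (walk X (Suc m) \<omega>)) / real n) \<longlonglongrightarrow> 0"
    unfolding F_def p_def by (rule AE_martingale_averages_tendsto_zero)
  then show ?thesis
    using freq
  proof eventually_elim
    case (elim \<omega>)
    have shift: "(\<Sum>m<n. of_bool (suffix w (walk X m \<omega>)))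
        = real (lin_occ (walk X n \<omega>) w) - of_bool (suffix w (walk X n \<omega>))" for n
      using sum.lessThan_Suc_shift[of "\<lambda>m. of_bool (suffix w (walk X m \<omega>)) :: real" n] w(1)
      by (simp add: lin_occ_walk)
    have "(\<Sum>m<n. F (walk X (Suc m) \<omega>))
        = real (lin_occ (walk X n \<omega>) (w @ [b])) - p * (\<Sum>m<n. of_bool (suffix w (walk X m \<omega>)))" for n
      by (simp add: F_def walk_Suc lin_occ_walk sum_subtractf sum_distrib_left)
    then have "\<bar>real (lin_occ (walk X n \<omega>) (w @ [b]))
        - ((\<Sum>m<n. F (walk X (Suc m) \<omega>)) + p * real (lin_occ (walk X n \<omega>) w))\<bar> \<le> \<bar>p\<bar>" for n
      by (simp add: shift algebra_simps abs_mult)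
    moreover have "(\<lambda>n. ((\<Sum>m<n. F (walk X (Suc m) \<omega>)) + p * real (lin_occ (walk X n \<omega>) w)) / real n)
        \<longlonglongrightarrow> 0 + p * path_weight S P (stationary_dist S P) w"
      using tendsto_add[OF elim(1) tendsto_mult_left[OF elim(2), of p]]
      by (simp add: add_divide_distrib)
    ultimately have "(\<lambda>n. real (lin_occ (walk X n \<omega>) (w @ [b])) / real n)
        \<longlonglongrightarrow> 0 + p * path_weight S P (stationary_dist S P) w"
      by (rule LIMSEQ_div_if_bounded_difference[rotated])
    then show ?case
      using path_weight_snoc[OF w b] by (simp add: p_def mult.commute)
  qed
qed

lemma AE_pattern_count_outside_states:
  assumes "\<not> set v \<subseteq> S"
  shows "AE \<omega> in M. \<forall>n. lin_occ (walk X n \<omega>) v = 0"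
  using AE_walk_in_states
proof eventually_elim
  case (elim \<omega>)
  have "set (walk X m \<omega>) \<subseteq> S" for m
    using elim by (auto simp: walk_def)
  then have "\<not> suffix v (walk X (Suc m) \<omega>)" for m
    using assms set_mono_suffix by blast
  moreover have "v \<noteq> []" using assms by auto
  ultimately have "real (lin_occ (walk X n \<omega>) v) = 0" for n
    by (simp add: lin_occ_walk)
  then show ?case by simp
qed

lemma AE_pattern_frequency:
  assumes "v \<noteq> []"
  shows "AE \<omega> in M. (\<lambda>n. real (lin_occ (walk X n \<omega>) v) / real n)
    \<longlonglongrightarrow> path_weight S P (stationary_dist S P) v"
proof (cases "set v \<subseteq> S")
  case False
  from AE_pattern_count_outside_states[OF False] show ?thesis
    by eventually_elim (use False in \<open>simp add: path_weight_def\<close>)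
next
  case True
  then show ?thesis
    using assms
  proof (induction v rule: rev_induct)
    case (snoc b w)
    show ?case
    proof (cases "w = []")
      case True
      then show ?thesis
        using AE_state_frequency[of b] snoc.prems by (simp add: path_weight_def)
    next
      case False
      then show ?thesis
        using snoc by (intro AE_pattern_frequency_snoc) auto
    qed
  qed simp
qed

lemma AE_cyclic_frequency:
  fixes \<beta> :: "'e \<Rightarrow> 'e \<Rightarrow> 'e list"
  shows "AE \<omega> in M. \<forall>v. v \<noteq> [] \<longrightarrow> (\<lambda>n. real (cyc_occ (closing \<beta> (walk X n \<omega>)) v) / real n)
    \<longlonglongrightarrow> path_weight S P (stationary_dist S P) v"
  unfolding AE_all_countable
proof
  fix v :: "'e list"
  obtain C where C: "\<And>e e'. length (\<beta> e e') \<le> C"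
    using closing_paths_length_bounded[of \<beta>] by blast
  show "AE \<omega> in M. v \<noteq> [] \<longrightarrow> (\<lambda>n. real (cyc_occ (closing \<beta> (walk X n \<omega>)) v) / real n)
      \<longlonglongrightarrow> path_weight S P (stationary_dist S P) v"
  proof (cases "v = []")
    case False
    from AE_pattern_frequency[OF False] show ?thesis
      by eventually_elim
        (auto intro: LIMSEQ_div_if_bounded_difference[OF _ cyc_occ_closing_deviation[OF False C]])
  qed simp
qed

lemma AE_pcurr_converges:
  fixes \<beta> :: "'e \<Rightarrow> 'e \<Rightarrow> 'e list"
  shows "AE \<omega> in M. pcurr_converges orig iv
    (\<lambda>n. counting_current iv (closing \<beta> (walk X (Suc n) \<omega>))) (char_current iv S P)"
  using AE_cyclic_frequency[of \<beta>]
proof eventually_elim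
  case (elim \<omega>)
  have "(\<lambda>n. real (cyc_occ (closing \<beta> (walk X (Suc n) \<omega>)) v) / real (Suc n))
      \<longlonglongrightarrow> path_weight S P (stationary_dist S P) v" if "v \<noteq> []" for v
    using LIMSEQ_Suc[OF elim[rule_format, OF that]] .
  then show ?case
    by (rule pcurr_converges_if_cyclic_frequencies)
qed

end

lemma irreducible_markov_walkI:
  assumes "gamma_based_chain orig iv S P" and "irreducible_chain S P" and "prob_space M"
    and "\<forall>n. X n \<in> measurable M (count_space UNIV)"
    and "\<forall>n s. n \<ge> 1 \<longrightarrow> length s = n \<longrightarrow>
      measure M {\<omega> \<in> space M. \<forall>i<n. X (Suc i) \<omega> = s ! i} = path_weight S P \<mu> s"
  shows "irreducible_markov_walk M S P \<mu> X"
proof -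
  have chain: "finite S" "S \<noteq> {}" "\<And>s t. s \<in> S \<Longrightarrow> t \<in> S \<Longrightarrow> 0 \<le> P s t"
    "\<And>s. s \<in> S \<Longrightarrow> (\<Sum>t\<in>S. P s t) = 1"
    using assms(1) by (auto simp: gamma_based_chain_def)
  show ?thesis
    by (intro irreducible_markov_walk.intro markov_walk.intro markov_walk_axioms.intro
        irreducible_markov_chain.intro) (use chain assms(2-5) in blast)+
qed

lemma length_closing_le:
  fixes \<beta> :: "'e::finite \<Rightarrow> 'e \<Rightarrow> 'e list"
  shows "\<exists>C>0. \<forall>\<gamma>. real (length (closing \<beta> \<gamma>)) \<le> real (length \<gamma>) + C"
proof -
  obtain C where "\<And>e e'. length (\<beta> e e') \<le> C"
    using closing_paths_length_bounded[of \<beta>] by blast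
  then have "real (length (\<beta> e e')) \<le> real C + 1" for e e'
    by (smt (verit) of_nat_le_iff)
  then show ?thesis
    by (intro exI[of _ "real C + 1"]) (simp add: closing_def)
qed

theorem mainTheorem18:
  fixes orig :: "'e::finite \<Rightarrow> 'v::finite" and iv :: "'e \<Rightarrow> 'e" and N :: nat
    and S :: "'e set" and P :: "'e \<Rightarrow> 'e \<Rightarrow> real" and \<mu> :: "'e \<Rightarrow> real"
    and \<beta> :: "'e \<Rightarrow> 'e \<Rightarrow> 'e list"
    and M :: "'a measure" and X :: "nat \<Rightarrow> 'a \<Rightarrow> 'e"
  assumes "N \<ge> 2"
    and "chart orig iv N"
    and "gamma_based_chain orig iv S P"
    and "irreducible_chain S P"
    and "\<forall>s. s \<notin> S \<longrightarrow> \<mu> s = 0" and "\<forall>s\<in>S. \<mu> s \<ge> 0" and "(\<Sum>s\<in>S. \<mu> s) = 1"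
    and "closing_path_system orig iv \<beta>"
    and "prob_space M"
    and "\<forall>n. X n \<in> measurable M (count_space UNIV)"
    and "\<forall>n s. n \<ge> 1 \<longrightarrow> length s = n \<longrightarrow>
           measure M {\<omega> \<in> space M. \<forall>i<n. X (Suc i) \<omega> = s ! i} = path_weight S P \<mu> s"
  shows "(\<exists>C>0. \<forall>n\<ge>1. \<forall>\<omega>\<in>space M.
            real (length (closing \<beta> (walk X n \<omega>))) \<le> real n + C)
       \<and> (AE \<omega> in M. pcurr_converges orig iv
            (\<lambda>n. counting_current iv (closing \<beta> (walk X (Suc n) \<omega>)))
            (char_current iv S P))"
proof
  show "\<exists>C>0. \<forall>n\<ge>1. \<forall>\<omega>\<in>space M. real (length (closing \<beta> (walk X n \<omega>))) \<le> real n + C"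
    using length_closing_le[of \<beta>] by (metis length_walk)
  (* The hypotheses on the graph (N \<ge> 2, the chart, the closing path system and the adjacency
     condition in gamma_based_chain) only make the limit objects geometric currents; the
     convergence itself is a statement about the chain alone. *)
  interpret irreducible_markov_walk M S P \<mu> X
    using assms(3,4,9-11) by (rule irreducible_markov_walkI)
  show "AE \<omega> in M. pcurr_converges orig iv
      (\<lambda>n. counting_current iv (closing \<beta> (walk X (Suc n) \<omega>))) (char_current iv S P)"
    by (rule AE_pcurr_converges)
qed

end
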